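(* Let $S$ be a finite training set of examples $(\mathbf{x},y)$ with $\mathbf{x}\in[-1,1]^d$, $y\in\{1,\dots,k\}$. Let $F,\bar F\subseteq\{1,\dots,d\}$ with $\bar F\setminus F\neq\emptyset$, and let $$W\in\arg\min_{V:\,\mathrm{supp}(V)\subseteq F}L(V),\qquad W^\star\in\arg\min_{V:\,\mathrm{supp}(V)\subseteq\bar F}L(V)$$ (both minimizers assumed to exist). Let $j\in\arg\max_{i\in\{1,\dots,d\}}\|\nabla_iL(W)\|_1$. If $L(W)>L(W^\star)$, then $$L(W)-\inf_{\mathbf{u}\in\mathbb{R}^k}L(W+\mathbf{u}\,\mathbf{e}_j^\top)\;\ge\;\frac{\big(L(W)-L(W^\star)\big)^2}{4\Big(\sum_{i\in\bar F\setminus F}\|W^\star_{\cdot,i}\|_\infty\Big)^2}.$$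
   Context: For $V\in\mathbb{R}^{k\times d}$, $V_{\cdot,i}$ is its $i$-th column and $\mathrm{supp}(V)=\{i: V_{\cdot,i}\neq0\}$. The loss of $W$ on $(\mathbf{x},y)$ is $\ell(W,(\mathbf{x},y))=\ln\sum_{y'\in\{1,\dots,k\}}\exp\big(\mathbf{1}[y'\neq y]-(W\mathbf{x})_y+(W\mathbf{x})_{y'}\big)$, and $L(W)=\frac1{|S|}\sum_{(\mathbf{x},y)\in S}\ell(W,(\mathbf{x},y))$. $\nabla_iL(W)\in\mathbb{R}^k$ denotes the $i$-th column of the gradient matrix $\nabla L(W)$, and $\mathbf{e}_j\in\mathbb{R}^d$ is the $j$-th standard basis vector. *)

theory Defs
  imports "HOL-Analysis.Analysis" "HOL-Library.Multiset"
begin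

(* Weight matrices W \<in> R^{k x d}: rows indexed by the finite label type 'k,
   columns by the finite feature type 'd. An example is (x, y) with x \<in> R^d, y a label. *)

definition loss :: "real^'d^'k \<Rightarrow> ((real^'d) \<times> 'k) \<Rightarrow> real" where
  "loss W e = (case e of (x, y) \<Rightarrow>
      ln (\<Sum>y'\<in>UNIV. exp ((if y' \<noteq> y then 1 else 0) - (W *v x) $ y + (W *v x) $ y')))"

(* empirical loss over the training set S (a finite multiset, duplicates allowed) *)
definition emp_loss :: "((real^'d) \<times> 'k) multiset \<Rightarrow> real^'d^'k \<Rightarrow> real" where
  "emp_loss S W = (\<Sum>e\<in>#S. loss W e) / real (size S)"

definition col :: "real^'d^'k \<Rightarrow> 'd \<Rightarrow> real^'k" where
  "col V i = (\<chi> r. V $ r $ i)"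

definition supp :: "real^'d^'k \<Rightarrow> 'd set" where
  "supp V = {i. col V i \<noteq> 0}"

(* gradient matrix of a differentiable function on matrices (Frobenius inner product) *)
definition grad :: "(real^'d^'k \<Rightarrow> real) \<Rightarrow> real^'d^'k \<Rightarrow> real^'d^'k" where
  "grad f W = (THE D. GDERIV f W :> D)"

definition norm1 :: "real^'k \<Rightarrow> real" where
  "norm1 v = (\<Sum>r\<in>UNIV. \<bar>v $ r\<bar>)"

definition norminf :: "real^'k \<Rightarrow> real" where
  "norminf v = Max (range (\<lambda>r. \<bar>v $ r\<bar>))"

(* u e_j^T : the k x d matrix whose j-th column is u and all other columns are zero *)
definition outer_e :: "real^'k \<Rightarrow> 'd \<Rightarrow> real^'d^'k" where
  "outer_e u j = (\<chi> r i. if i = j then u $ r else 0)"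

end

theory Submission
  imports Defs
begin

text \<open>
  Let G be the gradient of the empirical loss L at W, let g be the largest
  column l1-norm of G (attained at column j) and R the sum over the new features
  Fbar - F of the sup-norms of the columns of Wstar.

  (1) Upper bound on the gap. L is convex (each loss is a log-sum-exp of an affine
      function of the weights), so L W - L Wstar <= - <G, Wstar - W>. Since W minimises L
      on the subspace of matrices supported on F, G is orthogonal to that subspace, so
      only the columns in Fbar - F survive, and Hoelder's inequality column by column
      gives L W - L Wstar <= g * R.
  (2) Progress of one greedy step. Along a direction u e_j^T with |u_r| <= 1, the loss
      of every example with |x_j| <= 1 is a log-sum-exp whose second derivative is a
      variance of values in an interval of radius 1, hence at most 1. Taylor's theorem
      then gives L (W + t u e_j^T) <= L W + t <G, u e_j^T> + t^2/2; taking u = - sgn of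
      column j of G and t = g yields a decrease of at least g^2/2.
  Combining (1) and (2): (L W - L Wstar)^2 / (4 R^2) <= g^2/4 <= g^2/2.
\<close>

lemma gderiv_unique:
  fixes f :: "'a::real_inner \<Rightarrow> real"
  assumes "GDERIV f x :> D" "GDERIV f x :> E"
  shows "D = E"
proof -
  have "(\<lambda>h. inner h D) = (\<lambda>h. inner h E)"
    using has_derivative_unique assms unfolding gderiv_def by blast
  then have "inner (D - E) D = inner (D - E) E" by metis
  then have "inner (D - E) (D - E) = 0" by (simp add: inner_diff_right)
  then show ?thesis by simp
qed

lemma grad_eq: "GDERIV f W :> D \<Longrightarrow> grad f W = D"
  unfolding grad_def using gderiv_unique by blast

lemma GDERIV_inner: "GDERIV (\<lambda>h. inner h D) x :> D"
  unfolding gderiv_def by (intro bounded_linear_imp_has_derivative bounded_linear_inner_left)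

lemma GDERIV_sum:
  assumes "finite I" "\<And>i. i \<in> I \<Longrightarrow> GDERIV (f i) x :> D i"
  shows "GDERIV (\<lambda>x. \<Sum>i\<in>I. f i x) x :> (\<Sum>i\<in>I. D i)"
  using assms unfolding gderiv_def inner_sum_right by (intro has_derivative_sum) auto

lemma GDERIV_sum_mset:
  assumes "\<And>e. e \<in># S \<Longrightarrow> GDERIV (f e) x :> D e"
  shows "GDERIV (\<lambda>x. \<Sum>e\<in>#S. f e x) x :> (\<Sum>e\<in>#S. D e)"
  using assms by (induction S) (simp_all add: GDERIV_const GDERIV_add)

lemma GDERIV_divide_const:
  assumes "GDERIV f x :> D"
  shows "GDERIV (\<lambda>x. f x / c) x :> D /\<^sub>R c"
  using assms unfolding gderiv_def
  by (auto intro!: derivative_eq_intros simp: divide_inverse_commute inner_commute)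

lemma GDERIV_directional:
  fixes f :: "'a::real_inner \<Rightarrow> real"
  assumes "GDERIV f W :> G"
  shows "DERIV (\<lambda>t. f (W + t *\<^sub>R D)) 0 :> inner G D"
proof -
  have line: "((\<lambda>t. W + t *\<^sub>R D) has_derivative (\<lambda>t. t *\<^sub>R D)) (at 0)"
    by (auto intro!: derivative_eq_intros)
  have "(f has_derivative (\<lambda>h. inner h G)) (at ((\<lambda>t. W + t *\<^sub>R D) 0))"
    using assms by (simp add: gderiv_def)
  from has_derivative_compose[OF line this]
  have "((\<lambda>t. f (W + t *\<^sub>R D)) has_derivative (\<lambda>t. inner (t *\<^sub>R D) G)) (at 0)" .
  moreover have "(\<lambda>t. inner (t *\<^sub>R D) G) = (*) (inner G D)"
    by (auto simp: inner_commute)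
  ultimately show ?thesis by (simp add: has_field_derivative_def)
qed

lemma GDERIV_orthogonal_at_line_min:
  fixes f :: "'a::real_inner \<Rightarrow> real"
  assumes "GDERIV f W :> G" "\<And>t. f W \<le> f (W + t *\<^sub>R D)"
  shows "inner G D = 0"
  using DERIV_local_min[OF GDERIV_directional[OF assms(1)], of 1] assms(2) by simp

lemma convex_GDERIV_tangent:
  fixes f :: "'a::real_inner \<Rightarrow> real"
  assumes convex: "convex_on UNIV f" and G: "GDERIV f W :> G"
  shows "f W + inner G (V - W) \<le> f V"
proof -
  have line: "convex_on UNIV (\<lambda>t. f (W + t *\<^sub>R (V - W)))"
  proof (rule convex_onI)
    fix t x y :: real assume "0 < t" "t < 1"
    have "W + ((1 - t) *\<^sub>R x + t *\<^sub>R y) *\<^sub>R (V - W)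
          = (1 - t) *\<^sub>R (W + x *\<^sub>R (V - W)) + t *\<^sub>R (W + y *\<^sub>R (V - W))"
      by (simp add: algebra_simps)
    with convex_onD[OF convex, of t] \<open>0 < t\<close> \<open>t < 1\<close>
    show "f (W + ((1 - t) *\<^sub>R x + t *\<^sub>R y) *\<^sub>R (V - W))
          \<le> (1 - t) * f (W + x *\<^sub>R (V - W)) + t * f (W + y *\<^sub>R (V - W))"
      by simp
  qed simp
  have "f (W + 1 *\<^sub>R (V - W)) - f (W + 0 *\<^sub>R (V - W)) \<ge> inner G (V - W) * (1 - 0)"
    by (rule convex_on_imp_above_tangent[OF line]) (use GDERIV_directional[OF G] in auto)
  then show ?thesis by simp
qed

definition lse :: "'i set \<Rightarrow> ('i \<Rightarrow> real) \<Rightarrow> real" where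
  "lse I c = ln (\<Sum>i\<in>I. exp (c i))"

(* The mean of w under the softmax distribution with scores c; it is the slope of
   log-sum-exp along the direction w. *)
definition softmax_mean :: "'i set \<Rightarrow> ('i \<Rightarrow> real) \<Rightarrow> ('i \<Rightarrow> real) \<Rightarrow> real" where
  "softmax_mean I c w = (\<Sum>i\<in>I. exp (c i) * w i) / (\<Sum>i\<in>I. exp (c i))"

lemma lse_ge_member:
  assumes "finite I" "i \<in> I"
  shows "c i \<le> lse I c"
proof -
  have "exp (c i) \<le> (\<Sum>i\<in>I. exp (c i))"
    using assms by (intro member_le_sum) auto
  then have "ln (exp (c i)) \<le> ln (\<Sum>i\<in>I. exp (c i))"
    by (rule ln_mono) simp
  then show ?thesis by (simp add: lse_def)
qed

lemma lse_convex:
  assumes I: "finite I" "I \<noteq> {}" and t: "0 \<le> t" "t \<le> 1"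
  shows "lse I (\<lambda>i. (1 - t) * a i + t * b i) \<le> (1 - t) * lse I a + t * lse I b"
proof -
  define A where "A = (\<Sum>i\<in>I. exp (a i))"
  define B where "B = (\<Sum>i\<in>I. exp (b i))"
  have A: "A > 0" unfolding A_def using I by (intro sum_pos) auto
  have B: "B > 0" unfolding B_def using I by (intro sum_pos) auto
  define M where "M = (1 - t) * ln A + t * ln B"
  have pointwise: "exp ((1 - t) * a i + t * b i) * exp (- M)
                   \<le> (1 - t) * (exp (a i) / A) + t * (exp (b i) / B)" for i
  proof -
    have "exp ((1 - t) * a i + t * b i) * exp (- M)
          = exp ((1 - t) * (a i - ln A) + t * (b i - ln B))"
      unfolding M_def by (simp add: exp_add[symmetric] algebra_simps)
    also have "\<dots> \<le> (1 - t) * exp (a i - ln A) + t * exp (b i - ln B)"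
      using convex_onD[OF exp_convex, of t "a i - ln A" "b i - ln B"] t by simp
    also have "\<dots> = (1 - t) * (exp (a i) / A) + t * (exp (b i) / B)"
      using A B by (simp add: exp_diff)
    finally show ?thesis .
  qed
  have "(\<Sum>i\<in>I. exp ((1 - t) * a i + t * b i)) * exp (- M)
        \<le> (\<Sum>i\<in>I. (1 - t) * (exp (a i) / A) + t * (exp (b i) / B))"
    unfolding sum_distrib_right by (intro sum_mono pointwise)
  also have "\<dots> = (1 - t) * (A / A) + t * (B / B)"
    by (simp add: A_def B_def sum.distrib sum_distrib_left[symmetric] sum_divide_distrib[symmetric])
  also have "\<dots> = 1" using A B by simp
  finally have "(\<Sum>i\<in>I. exp ((1 - t) * a i + t * b i)) \<le> exp M"
    by (simp add: exp_minus field_simps)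
  moreover have "(\<Sum>i\<in>I. exp ((1 - t) * a i + t * b i)) > 0"
    using I by (intro sum_pos) auto
  ultimately have "ln (\<Sum>i\<in>I. exp ((1 - t) * a i + t * b i)) \<le> M"
    by (metis ln_exp ln_le_cancel_iff exp_gt_zero)
  then show ?thesis unfolding M_def A_def B_def lse_def .
qed

lemma lse_line_deriv:
  assumes I: "finite I" "I \<noteq> {}"
  shows "DERIV (\<lambda>t. lse I (\<lambda>i. c i + t * w i)) 0 :> softmax_mean I c w"
proof -
  have pos: "(\<Sum>i\<in>I. exp (c i + 0 * w i)) > 0" using I by (intro sum_pos) auto
  have "DERIV (\<lambda>t. \<Sum>i\<in>I. exp (c i + t * w i)) 0 :> (\<Sum>i\<in>I. exp (c i + 0 * w i) * w i)"
    by (rule DERIV_sum) (auto intro!: derivative_eq_intros)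
  from DERIV_chain2[OF DERIV_ln_divide[OF pos] this]
  show ?thesis by (simp add: lse_def softmax_mean_def)
qed

lemma weighted_variance_le_one:
  fixes p w :: "'i \<Rightarrow> real"
  assumes p: "\<And>i. i \<in> I \<Longrightarrow> p i \<ge> 0" and w: "\<And>i. i \<in> I \<Longrightarrow> \<bar>w i - m\<bar> \<le> 1"
  shows "(\<Sum>i\<in>I. p i * (w i)\<^sup>2) * (\<Sum>i\<in>I. p i) - (\<Sum>i\<in>I. p i * w i)\<^sup>2 \<le> (\<Sum>i\<in>I. p i)\<^sup>2"
proof -
  define Z where "Z = (\<Sum>i\<in>I. p i)"
  define Z1 where "Z1 = (\<Sum>i\<in>I. p i * w i)"
  define Z2 where "Z2 = (\<Sum>i\<in>I. p i * (w i)\<^sup>2)"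
  define V where "V = (\<Sum>i\<in>I. p i * (w i - m)\<^sup>2)"
  have V_expand: "V = Z2 - 2 * m * Z1 + m\<^sup>2 * Z"
    unfolding V_def Z_def Z1_def Z2_def
    by (simp add: power2_eq_square algebra_simps sum.distrib sum_distrib_left sum_subtractf)
  have "V \<le> Z"
    unfolding V_def Z_def
  proof (intro sum_mono)
    fix i assume "i \<in> I"
    then have "(w i - m)\<^sup>2 \<le> 1" using w abs_square_le_1 by blast
    with p[OF \<open>i \<in> I\<close>] show "p i * (w i - m)\<^sup>2 \<le> p i"
      using mult_left_mono by fastforce
  qed
  have Z0: "Z \<ge> 0" unfolding Z_def using p by (intro sum_nonneg) auto
  have "Z * V - (Z2 * Z - Z1\<^sup>2) = (Z1 - m * Z)\<^sup>2"
    unfolding V_expand by (simp add: power2_eq_square algebra_simps)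
  then have "Z2 * Z - Z1\<^sup>2 \<le> Z * V" by (smt (verit) zero_le_power2)
  also have "\<dots> \<le> Z\<^sup>2" using \<open>V \<le> Z\<close> Z0 by (simp add: power2_eq_square mult_left_mono)
  finally show ?thesis unfolding Z_def Z1_def Z2_def .
qed

(* Second-order bound for log-sum-exp along a direction w whose values lie within
   distance 1 of a common centre: its second derivative is a softmax variance, hence <= 1. *)
lemma lse_line_quadratic_bound:
  assumes I: "finite I" "I \<noteq> {}"
    and w: "\<And>i. i \<in> I \<Longrightarrow> \<bar>w i - m\<bar> \<le> 1" and x: "x \<ge> 0"
  shows "lse I (\<lambda>i. c i + x * w i) \<le> lse I c + x * softmax_mean I c w + x\<^sup>2 / 2"
proof (cases "x = 0")
  case True
  then show ?thesis by simp
next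
  case False
  with x have x_pos: "x > 0" by simp
  define Z where "Z = (\<lambda>s. \<Sum>i\<in>I. exp (c i + s * w i))"
  define Z1 where "Z1 = (\<lambda>s. \<Sum>i\<in>I. exp (c i + s * w i) * w i)"
  define Z2 where "Z2 = (\<lambda>s. \<Sum>i\<in>I. exp (c i + s * w i) * (w i)\<^sup>2)"
  have Z_pos: "Z s > 0" for s unfolding Z_def using I by (intro sum_pos) auto
  have dZ: "DERIV Z s :> Z1 s" for s
    unfolding Z_def Z1_def by (rule DERIV_sum) (auto intro!: derivative_eq_intros)
  have dZ1: "DERIV Z1 s :> Z2 s" for s
    unfolding Z1_def Z2_def by (rule DERIV_sum) (auto intro!: derivative_eq_intros simp: power2_eq_square)
  define L where "L = (\<lambda>s. ln (Z s))"
  define L1 where "L1 = (\<lambda>s. Z1 s / Z s)"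
  define L2 where "L2 = (\<lambda>s. (Z2 s * Z s - Z1 s * Z1 s) / (Z s * Z s))"
  have dL: "DERIV L s :> L1 s" for s
    using DERIV_chain2[OF DERIV_ln_divide[OF Z_pos] dZ] by (simp add: L_def L1_def)
  have dL1: "DERIV L1 s :> L2 s" for s
    unfolding L1_def L2_def using DERIV_divide[OF dZ1 dZ] Z_pos[of s] by simp
  have L2_le: "L2 s \<le> 1" for s
  proof -
    have "Z2 s * Z s - (Z1 s)\<^sup>2 \<le> (Z s)\<^sup>2"
      unfolding Z_def Z1_def Z2_def by (rule weighted_variance_le_one[OF _ w]) auto
    then show ?thesis
      unfolding L2_def using Z_pos[of s] by (simp add: divide_le_eq_1 power2_eq_square)
  qed
  define Ls where "Ls = (\<lambda>n. [L, L1, L2] ! n)"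
  have diff: "\<forall>m t. m < 2 \<and> 0 \<le> t \<and> t \<le> x \<longrightarrow> DERIV (Ls m) t :> Ls (Suc m) t"
    using dL dL1 by (auto simp: Ls_def nth_Cons split: nat.splits)
  from Taylor[of 2 Ls L 0 x 0 x, OF _ _ diff] x_pos
  obtain t where "L x = (\<Sum>m<2. Ls m 0 / fact m * (x - 0) ^ m) + Ls 2 t / fact 2 * (x - 0)\<^sup>2"
    by (auto simp: Ls_def)
  then have "L x = L 0 + L1 0 * x + L2 t / 2 * x\<^sup>2"
    by (simp add: Ls_def lessThan_nat_numeral)
  also have "\<dots> \<le> L 0 + L1 0 * x + 1 / 2 * x\<^sup>2"
    using L2_le[of t] by (intro add_left_mono mult_right_mono divide_right_mono) auto
  finally show ?thesis
    by (simp add: L_def L1_def Z_def Z1_def lse_def softmax_mean_def mult.commute)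
qed

definition margin :: "real^'d::finite^'k::finite \<Rightarrow> real^'d \<Rightarrow> 'k \<Rightarrow> 'k \<Rightarrow> real" where
  "margin V x y y' = (if y' \<noteq> y then 1 else 0) - (V *v x) $ y + (V *v x) $ y'"

lemma loss_eq_lse: "loss V (x, y) = lse UNIV (margin V x y)"
  by (simp add: loss_def lse_def margin_def)

lemma matrix_vector_component_inner:
  "((V::real^'d::finite^'k::finite) *v x) $ r = inner V (\<chi> r' i. if r' = r then x $ i else 0)"
proof -
  have "(\<Sum>i\<in>UNIV. V $ r' $ i * (if r' = r then x $ i else 0))
        = (if r' = r then (\<Sum>i\<in>UNIV. V $ r $ i * x $ i) else 0)" for r'
    by auto
  then show ?thesis by (simp add: matrix_vector_mult_def inner_vec_def)
qed

lemma loss_has_gderiv: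
  fixes W :: "real^'d::finite^'k::finite"
  shows "\<exists>D. GDERIV (\<lambda>V. loss V e) W :> D"
proof -
  obtain x y where e: "e = (x, y)" by force
  define row :: "'k \<Rightarrow> real^'d^'k" where "row r = (\<chi> r' i. if r' = r then x $ i else 0)" for r
  have margin_gderiv: "GDERIV (\<lambda>V. margin V x y y') W :> row y' - row y" for y'
    unfolding margin_def matrix_vector_component_inner row_def[symmetric]
    by (rule GDERIV_subst[OF GDERIV_add[OF GDERIV_diff[OF GDERIV_const GDERIV_inner] GDERIV_inner]])
      simp
  have "GDERIV (\<lambda>V. \<Sum>y'\<in>UNIV. exp (margin V x y y')) W
          :> (\<Sum>y'\<in>UNIV. exp (margin W x y y') *\<^sub>R (row y' - row y))"
    by (intro GDERIV_sum GDERIV_DERIV_compose[OF margin_gderiv] DERIV_exp) auto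
  moreover have "(\<Sum>y'\<in>UNIV. exp (margin W x y y')) > 0"
    by (intro sum_pos) auto
  ultimately have "GDERIV (\<lambda>V. ln (\<Sum>y'\<in>UNIV. exp (margin V x y y'))) W
      :> inverse (\<Sum>y'\<in>UNIV. exp (margin W x y y'))
         *\<^sub>R (\<Sum>y'\<in>UNIV. exp (margin W x y y') *\<^sub>R (row y' - row y))"
    by (intro GDERIV_DERIV_compose DERIV_ln)
  then show ?thesis unfolding e loss_eq_lse lse_def by blast
qed

lemma emp_loss_has_gderiv: "\<exists>G. GDERIV (emp_loss S) W :> G"
proof -
  obtain D where "\<And>e. GDERIV (\<lambda>V. loss V e) W :> D e"
    using loss_has_gderiv by metis
  from GDERIV_divide_const[OF GDERIV_sum_mset[of S "\<lambda>e V. loss V e", OF this]]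
  show ?thesis unfolding emp_loss_def[abs_def] by blast
qed

(* The margins are affine in the weights, so the loss and the empirical loss are convex. *)
lemma margin_convex_comb:
  "margin ((1 - t) *\<^sub>R A + t *\<^sub>R B) x y y' = (1 - t) * margin A x y y' + t * margin B x y y'"
  by (simp add: margin_def matrix_vector_component_inner inner_add_left algebra_simps)

lemma loss_convex_comb:
  assumes "0 \<le> t" "t \<le> 1"
  shows "loss ((1 - t) *\<^sub>R A + t *\<^sub>R B) e \<le> (1 - t) * loss A e + t * loss B e"
proof (cases e)
  case (Pair x y)
  have "margin ((1 - t) *\<^sub>R A + t *\<^sub>R B) x y = (\<lambda>y'. (1 - t) * margin A x y y' + t * margin B x y y')"
    by (rule ext) (rule margin_convex_comb)
  then show ?thesis
    using lse_convex[OF _ _ assms, of UNIV "margin A x y" "margin B x y"] by (simp add: Pair loss_eq_lse)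
qed

lemma emp_loss_convex: "convex_on UNIV (emp_loss S)"
proof (rule convex_onI)
  fix t :: real and A B assume "0 < t" "t < 1"
  then have "(\<Sum>e\<in>#S. loss ((1 - t) *\<^sub>R A + t *\<^sub>R B) e) \<le> (\<Sum>e\<in>#S. (1 - t) * loss A e + t * loss B e)"
    by (intro sum_mset_mono loss_convex_comb) auto
  also have "\<dots> = (1 - t) * (\<Sum>e\<in>#S. loss A e) + t * (\<Sum>e\<in>#S. loss B e)"
    by (induction S) (auto simp: algebra_simps)
  finally have "(\<Sum>e\<in>#S. loss ((1 - t) *\<^sub>R A + t *\<^sub>R B) e) / real (size S)
             \<le> ((1 - t) * (\<Sum>e\<in>#S. loss A e) + t * (\<Sum>e\<in>#S. loss B e)) / real (size S)"
    by (rule divide_right_mono) simp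
  then show "emp_loss S ((1 - t) *\<^sub>R A + t *\<^sub>R B) \<le> (1 - t) * emp_loss S A + t * emp_loss S B"
    by (simp add: emp_loss_def add_divide_distrib)
qed simp

(* The loss is nonnegative (the margin for y' = y is 0); so the infimum of the empirical
   loss is bounded below. *)
lemma loss_nonneg: "loss V e \<ge> 0"
proof (cases e)
  case (Pair x y)
  have "margin V x y y \<le> lse UNIV (margin V x y)" by (rule lse_ge_member) auto
  then show ?thesis by (simp add: Pair loss_eq_lse margin_def)
qed

lemma emp_loss_nonneg: "emp_loss S V \<ge> 0"
proof -
  have "(\<Sum>e\<in>#S. (0::real)) \<le> (\<Sum>e\<in>#S. loss V e)"
    by (intro sum_mset_mono loss_nonneg)
  then show ?thesis unfolding emp_loss_def by simp
qed

lemma outer_e_mult_component: "(outer_e s j *v x) $ r = s $ r * x $ j"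
proof -
  have "(if i = j then s $ r else 0) * x $ i = (if i = j then s $ r * x $ j else 0)" for i
    by simp
  then show ?thesis by (simp add: matrix_vector_mult_def outer_e_def)
qed

lemma margin_column_step:
  "margin (W + t *\<^sub>R outer_e s j) x y y' = margin W x y y' + t * (x $ j * (s $ y' - s $ y))"
  by (simp add: margin_def matrix_vector_mult_add_rdistrib scaleR_matrix_vector_assoc[symmetric]
      outer_e_mult_component algebra_simps)

lemma loss_column_deriv:
  "DERIV (\<lambda>t. loss (W + t *\<^sub>R outer_e s j) (x, y)) 0
     :> softmax_mean UNIV (margin W x y) (\<lambda>y'. x $ j * (s $ y' - s $ y))"
  unfolding loss_eq_lse margin_column_step by (rule lse_line_deriv) auto

lemma loss_column_quadratic:
  assumes "\<bar>x $ j\<bar> \<le> 1" "\<And>r. \<bar>s $ r\<bar> \<le> 1" "t \<ge> 0"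
  shows "loss (W + t *\<^sub>R outer_e s j) (x, y)
           \<le> loss W (x, y) + t * softmax_mean UNIV (margin W x y) (\<lambda>y'. x $ j * (s $ y' - s $ y))
             + t\<^sup>2 / 2"
proof -
  have "\<bar>x $ j * (s $ y' - s $ y) - (- (x $ j * s $ y))\<bar> \<le> 1" for y'
    using assms(1) assms(2)[of y'] by (simp add: abs_mult algebra_simps mult_le_one)
  then show ?thesis
    unfolding loss_eq_lse margin_column_step
    by (intro lse_line_quadratic_bound[where m = "- (x $ j * s $ y)"] assms(3)) auto
qed

lemma DERIV_sum_mset:
  assumes "\<And>e. e \<in># S \<Longrightarrow> DERIV (f e) x :> d e"
  shows "DERIV (\<lambda>t. \<Sum>e\<in>#S. f e t) x :> (\<Sum>e\<in>#S. d e)"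
  using assms by (induction S) (auto intro!: derivative_eq_intros)

lemma emp_loss_column_smooth:
  assumes G: "GDERIV (emp_loss S) W :> G"
    and box: "\<And>x y. (x, y) \<in># S \<Longrightarrow> \<bar>x $ j\<bar> \<le> 1"
    and s: "\<And>r. \<bar>s $ r\<bar> \<le> 1" and t: "t \<ge> 0"
  shows "emp_loss S (W + t *\<^sub>R outer_e s j) \<le> emp_loss S W + t * inner G (outer_e s j) + t\<^sup>2 / 2"
proof -
  define d where "d = (\<lambda>(x, y). softmax_mean UNIV (margin W x y) (\<lambda>y'. x $ j * (s $ y' - s $ y)))"
  let ?n = "real (size S)"
  have "DERIV (\<lambda>t. emp_loss S (W + t *\<^sub>R outer_e s j)) 0 :> (\<Sum>e\<in>#S. d e) / ?n"
    unfolding emp_loss_def d_def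
    by (intro DERIV_cdivide DERIV_sum_mset) (auto simp: loss_column_deriv split: prod.split)
  with GDERIV_directional[OF G] have slope: "(\<Sum>e\<in>#S. d e) / ?n = inner G (outer_e s j)"
    using DERIV_unique by blast
  have "(\<Sum>e\<in>#S. loss (W + t *\<^sub>R outer_e s j) e) \<le> (\<Sum>e\<in>#S. loss W e + t * d e + t\<^sup>2 / 2)"
    by (intro sum_mset_mono) (auto simp: d_def intro!: loss_column_quadratic box s t)
  also have "\<dots> = (\<Sum>e\<in>#S. loss W e) + t * (\<Sum>e\<in>#S. d e) + ?n * (t\<^sup>2 / 2)"
    by (induction S) (auto simp: algebra_simps)
  finally have "emp_loss S (W + t *\<^sub>R outer_e s j)
                  \<le> ((\<Sum>e\<in>#S. loss W e) + t * (\<Sum>e\<in>#S. d e) + ?n * (t\<^sup>2 / 2)) / ?n"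
    unfolding emp_loss_def by (rule divide_right_mono) simp
  also have "\<dots> \<le> emp_loss S W + t * inner G (outer_e s j) + t\<^sup>2 / 2"
    by (cases "?n = 0") (simp_all add: emp_loss_def add_divide_distrib slope[symmetric])
  finally show ?thesis .
qed

lemma inner_by_columns:
  "inner (G::real^'d::finite^'k::finite) V = (\<Sum>i\<in>UNIV. inner (col G i) (col V i))"
  by (simp add: inner_vec_def col_def sum.swap[of _ "UNIV :: 'd set"])

lemma component_le_norminf: "\<bar>v $ r\<bar> \<le> norminf v"
  unfolding norminf_def by (rule Max_ge) auto

lemma norminf_nonneg: "norminf v \<ge> 0"
  using component_le_norminf abs_ge_zero order_trans by blast

lemma norm1_nonneg: "norm1 v \<ge> 0"
  unfolding norm1_def by (intro sum_nonneg) auto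

lemma inner_le_norm1_norminf: "\<bar>inner u v\<bar> \<le> norm1 u * norminf v"
proof -
  have "\<bar>inner u v\<bar> \<le> (\<Sum>r\<in>UNIV. \<bar>u $ r\<bar> * \<bar>v $ r\<bar>)"
    unfolding inner_vec_def by (rule sum_abs[THEN order_trans]) (simp add: abs_mult)
  also have "\<dots> \<le> (\<Sum>r\<in>UNIV. \<bar>u $ r\<bar> * norminf v)"
    by (intro sum_mono mult_left_mono component_le_norminf) auto
  finally show ?thesis by (simp add: norm1_def sum_distrib_right)
qed

lemma col_outside_supp: "i \<notin> supp V \<Longrightarrow> col V i = 0"
  unfolding supp_def by simp

lemma inner_outer_e: "inner (G::real^'d::finite^'k::finite) (outer_e s j) = inner (col G j) s"
proof -
  have "inner (col G i) (col (outer_e s j) i) = (if i = j then inner (col G j) s else 0)" for i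
    by (simp add: col_def outer_e_def inner_vec_def)
  then show ?thesis by (simp add: inner_by_columns)
qed

lemma outer_e_scaleR: "outer_e (c *\<^sub>R s) j = c *\<^sub>R outer_e s j"
  by (simp add: outer_e_def vec_eq_iff)

lemma gap_le_column_gradients:
  fixes W Wstar :: "real^'d::finite^'k::finite"
  assumes G: "GDERIV (emp_loss S) W :> G"
    and W_supp: "supp W \<subseteq> F" and W_min: "\<forall>V. supp V \<subseteq> F \<longrightarrow> emp_loss S W \<le> emp_loss S V"
    and Wstar_supp: "supp Wstar \<subseteq> Fbar"
  shows "emp_loss S W - emp_loss S Wstar \<le> (\<Sum>i\<in>Fbar - F. norm1 (col G i) * norminf (col Wstar i))"
proof -
  define P where "P = (\<chi> r i. if i \<in> F then (Wstar - W) $ r $ i else 0)"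
  have W_col: "i \<notin> F \<Longrightarrow> col W i = 0" for i using W_supp col_outside_supp by blast
  have Wstar_col: "i \<notin> Fbar \<Longrightarrow> col Wstar i = 0" for i using Wstar_supp col_outside_supp by blast
  have P_col: "col P i = (if i \<in> F then col (Wstar - W) i else 0)" for i
    by (simp add: P_def col_def vec_eq_iff)
  \<comment> \<open>first-order optimality of W on the subspace of matrices supported on F\<close>
  have "i \<notin> F \<Longrightarrow> col (W + t *\<^sub>R P) i = 0" for i t
    using W_col[of i] P_col[of i] by (simp add: col_def vec_eq_iff)
  then have "supp (W + t *\<^sub>R P) \<subseteq> F" for t
    unfolding supp_def by blast
  then have P_orth: "inner G P = 0"
    using W_min by (intro GDERIV_orthogonal_at_line_min[OF G]) simp
  have "col (Wstar - W) i = col P i + (if i \<in> Fbar - F then col Wstar i else 0)" for i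
    using W_col[of i] Wstar_col[of i] by (auto simp: P_def col_def vec_eq_iff)
  then have "inner G (Wstar - W) = inner G P + (\<Sum>i\<in>UNIV. if i \<in> Fbar - F then inner (col G i) (col Wstar i) else 0)"
    by (simp add: inner_by_columns inner_add_right sum.distrib if_distrib[of "inner _"] cong: if_cong)
  also have "\<dots> = (\<Sum>i\<in>Fbar - F. inner (col G i) (col Wstar i))"
    by (simp add: P_orth sum.If_cases set_diff_eq)
  finally have split: "inner G (Wstar - W) = (\<Sum>i\<in>Fbar - F. inner (col G i) (col Wstar i))" .
  have "emp_loss S W - emp_loss S Wstar \<le> - inner G (Wstar - W)"
    using convex_GDERIV_tangent[OF emp_loss_convex G, of Wstar] by simp
  also have "\<dots> = (\<Sum>i\<in>Fbar - F. - inner (col G i) (col Wstar i))"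
    by (simp add: split sum_negf)
  also have "\<dots> \<le> (\<Sum>i\<in>Fbar - F. norm1 (col G i) * norminf (col Wstar i))"
    by (intro sum_mono abs_le_D2 inner_le_norm1_norminf)
  finally show ?thesis .
qed

(* Estimate (2): optimising over column j alone decreases the loss by at least half the
   squared l1-norm of the j-th gradient column (take u = - sgn of that column, step g). *)
lemma greedy_column_decrease:
  fixes G W :: "real^'d::finite^'k::finite"
  assumes G: "GDERIV (emp_loss S) W :> G"
    and box: "\<And>x y. (x, y) \<in># S \<Longrightarrow> \<bar>x $ j\<bar> \<le> 1"
  shows "(norm1 (col G j))\<^sup>2 / 2 \<le> emp_loss S W - (INF u. emp_loss S (W + outer_e u j))"
proof -
  define g where "g = norm1 (col G j)"
  define s :: "real^'k" where "s = (\<chi> r. - sgn (G $ r $ j))"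
  have s_bound: "\<bar>s $ r\<bar> \<le> 1" for r
    by (simp add: s_def abs_sgn_eq)
  have "inner G (outer_e s j) = - g"
    unfolding inner_outer_e by (simp add: inner_vec_def s_def col_def g_def norm1_def abs_sgn sum_negf)
  with emp_loss_column_smooth[OF G box s_bound, where t = g]
  have "emp_loss S (W + outer_e (g *\<^sub>R s) j) \<le> emp_loss S W - g\<^sup>2 / 2"
    by (simp add: g_def norm1_nonneg outer_e_scaleR power2_eq_square)
  moreover have "(INF u. emp_loss S (W + outer_e u j)) \<le> emp_loss S (W + outer_e (g *\<^sub>R s) j)"
    by (rule cINF_lower) (auto intro: bdd_belowI[where m = 0] emp_loss_nonneg)
  ultimately show ?thesis unfolding g_def by linarith
qed

lemma squared_gap_bound:
  fixes \<delta> g R :: real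
  assumes "0 < \<delta>" "\<delta> \<le> g * R" "0 \<le> g" "0 \<le> R"
  shows "\<delta>\<^sup>2 / (4 * R\<^sup>2) \<le> g\<^sup>2 / 2"
proof -
  have "R > 0" using assms by (metis less_eq_real_def less_le_trans mult_zero_right)
  have "\<delta>\<^sup>2 / (4 * R\<^sup>2) \<le> (g * R)\<^sup>2 / (4 * R\<^sup>2)"
    using assms by (intro divide_right_mono power_mono) auto
  also have "\<dots> = g\<^sup>2 / 4" using \<open>R > 0\<close> by (simp add: power_mult_distrib)
  also have "\<dots> \<le> g\<^sup>2 / 2" by simp
  finally show ?thesis .
qed

theorem lemmaA3:
  fixes S :: "((real^'d::finite) \<times> 'k::finite) multiset"
    and F Fbar :: "'d set"
    and W Wstar :: "real^'d^'k"
    and j :: 'd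
  assumes S_box: "\<forall>(x, y) \<in> set_mset S. \<forall>i. \<bar>x $ i\<bar> \<le> 1"
    and Fdiff: "Fbar - F \<noteq> {}"
    and W_min: "supp W \<subseteq> F" "\<forall>V. supp V \<subseteq> F \<longrightarrow> emp_loss S W \<le> emp_loss S V"
    and Wstar_min: "supp Wstar \<subseteq> Fbar" "\<forall>V. supp V \<subseteq> Fbar \<longrightarrow> emp_loss S Wstar \<le> emp_loss S V"
    and j_max: "\<forall>i. norm1 (col (grad (emp_loss S) W) i) \<le> norm1 (col (grad (emp_loss S) W) j)"
    and gap: "emp_loss S W > emp_loss S Wstar"
  shows "emp_loss S W - (INF u. emp_loss S (W + outer_e u j))
           \<ge> (emp_loss S W - emp_loss S Wstar)^2
              / (4 * (\<Sum>i\<in>Fbar - F. norminf (col Wstar i))^2)"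
proof -
  obtain G where G: "GDERIV (emp_loss S) W :> G" using emp_loss_has_gderiv by blast
  define g where "g = norm1 (col G j)"
  define R where "R = (\<Sum>i\<in>Fbar - F. norminf (col Wstar i))"
  have "emp_loss S W - emp_loss S Wstar \<le> (\<Sum>i\<in>Fbar - F. norm1 (col G i) * norminf (col Wstar i))"
    by (rule gap_le_column_gradients[OF G W_min Wstar_min(1)])
  also have "\<dots> \<le> (\<Sum>i\<in>Fbar - F. g * norminf (col Wstar i))"
    using j_max by (intro sum_mono mult_right_mono norminf_nonneg) (simp add: grad_eq[OF G] g_def)
  also have "\<dots> = g * R" by (simp add: R_def sum_distrib_left)
  finally have "(emp_loss S W - emp_loss S Wstar)\<^sup>2 / (4 * R\<^sup>2) \<le> g\<^sup>2 / 2"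
    using gap by (intro squared_gap_bound) (auto simp: g_def R_def norm1_nonneg intro: sum_nonneg norminf_nonneg)
  also have "\<dots> \<le> emp_loss S W - (INF u. emp_loss S (W + outer_e u j))"
    unfolding g_def using S_box by (intro greedy_column_decrease[OF G]) auto
  finally show ?thesis unfolding R_def .
qed

end
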